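(* Let $\beta>0$ and let $L:(0,\infty)\to(0,\infty)$ be slowly varying at $\infty$ with $n\mapsto L(e^n)$ ultimately monotonically increasing. For all sufficiently large $y$, let $n\ge2$ be the integer with $n-1+\frac{1}{2\beta}\log L(e^{2n-2})\le y<n+\frac{1}{2\beta}\log L(e^{2n})$, and define \[ g_1(y)=\begin{cases} n-1, & \text{if } n-1+\frac{1}{2\beta}\log L(e^{2n-2})\le y<n-1+\frac1{2\beta}\log L(e^{2n}),\\ y-\frac{1}{2\beta}\log L(e^{2n}), & \text{if } n-1+\frac1{2\beta}\log L(e^{2n})\le y<n+\frac1{2\beta}\log L(e^{2n}),\end{cases} \] and $\tilde g_1(y)=y-\frac{1}{2\beta}\log L(e^{2n-2})$. Then $\tilde g_1(y)-g_1(y)\to0$ as $y\to\infty$. *)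

theory Defs
  imports Complex_Main
begin

definition slowly_varying :: "(real \<Rightarrow> real) \<Rightarrow> bool" where
  "slowly_varying L \<longleftrightarrow> (\<forall>lam>0. ((\<lambda>x. L (lam * x) / L x) \<longlongrightarrow> 1) at_top)"

definition lowpt :: "real \<Rightarrow> (real \<Rightarrow> real) \<Rightarrow> nat \<Rightarrow> real" where
  "lowpt \<beta> L n = real n - 1 + ln (L (exp (2 * real n - 2))) / (2 * \<beta>)"

definition idx :: "real \<Rightarrow> (real \<Rightarrow> real) \<Rightarrow> real \<Rightarrow> nat" where
  "idx \<beta> L y = (THE n. 2 \<le> n \<and> lowpt \<beta> L n \<le> y \<and> y < lowpt \<beta> L (n + 1))"

definition g1 :: "real \<Rightarrow> (real \<Rightarrow> real) \<Rightarrow> real \<Rightarrow> real" where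
  "g1 \<beta> L y = (let n = idx \<beta> L y in
     if y < real n - 1 + ln (L (exp (2 * real n))) / (2 * \<beta>) then real n - 1
     else y - ln (L (exp (2 * real n))) / (2 * \<beta>))"

definition g1_tilde :: "real \<Rightarrow> (real \<Rightarrow> real) \<Rightarrow> real \<Rightarrow> real" where
  "g1_tilde \<beta> L y = (let n = idx \<beta> L y in y - ln (L (exp (2 * real n - 2))) / (2 * \<beta>))"

end

theory Submission
  imports Defs "HOL-Real_Asymp.Real_Asymp"
begin

text \<open>
  With \<open>a n = lowpt \<beta> L n\<close> and \<open>\<delta> = ln_increment L\<close> one has
  \<open>a (n + 1) = a n + 1 + \<delta> n / (2\<beta>)\<close>. Monotonicity of \<open>L(e\<^sup>n)\<close> makes \<open>\<delta> n \<ge> 0\<close>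
  eventually, so \<open>a\<close> eventually grows by steps \<open>\<ge> 1\<close>; hence for large \<open>y\<close> the index
  \<open>n = idx \<beta> L y\<close> is well defined and tends to infinity. On \<open>[a n, a (n + 1))\<close> the difference
  \<open>g1_tilde - g1\<close> lies in \<open>[0, \<delta> n / (2\<beta>)]\<close>, and \<open>\<delta> n \<rightarrow> 0\<close> because \<open>L\<close> is slowly varying.
\<close>

definition ln_increment :: "(real \<Rightarrow> real) \<Rightarrow> nat \<Rightarrow> real" where
  "ln_increment L n = ln (L (exp (2 * real n))) - ln (L (exp (2 * real n - 2)))"

lemma slowly_varying_ln_diff_tendsto_0:
  assumes "slowly_varying L" and pos: "\<forall>x>0. L x > 0" and "c > 0"
  shows "((\<lambda>x. ln (L (c * x)) - ln (L x)) \<longlongrightarrow> 0) at_top"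
proof -
  have "((\<lambda>x. L (c * x) / L x) \<longlongrightarrow> 1) at_top"
    using assms(1,3) unfolding slowly_varying_def by blast
  then have "((\<lambda>x. ln (L (c * x) / L x)) \<longlongrightarrow> ln 1) at_top"
    by (rule tendsto_ln) simp
  moreover have "eventually (\<lambda>x. ln (L (c * x) / L x) = ln (L (c * x)) - ln (L x)) at_top"
  proof (rule eventually_mono[OF eventually_gt_at_top[of 0]])
    fix x :: real
    assume "x > 0"
    then have "L (c * x) > 0" and "L x > 0"
      using pos \<open>c > 0\<close> by simp_all
    then show "ln (L (c * x) / L x) = ln (L (c * x)) - ln (L x)"
      by (simp add: ln_div)
  qed
  ultimately show ?thesis
    by (simp add: tendsto_cong)
qed

lemma ln_increment_tendsto_0:
  assumes "slowly_varying L" and "\<forall>x>0. L x > 0"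
  shows "ln_increment L \<longlonglongrightarrow> 0"
proof -
  have "((\<lambda>x. ln (L (exp 2 * x)) - ln (L x)) \<longlongrightarrow> 0) at_top"
    using slowly_varying_ln_diff_tendsto_0[OF assms] by simp
  moreover have "filterlim (\<lambda>n::nat. exp (2 * real n - 2)) at_top sequentially"
    by real_asymp
  ultimately have "((\<lambda>n. ln (L (exp 2 * exp (2 * real n - 2))) - ln (L (exp (2 * real n - 2))))
      \<longlongrightarrow> 0) sequentially"
    by (rule filterlim_compose)
  then show ?thesis
    unfolding ln_increment_def[abs_def] by (simp add: mult_exp_exp)
qed

lemma eventually_ln_increment_nonneg:
  assumes pos: "\<forall>x>0. L x > 0"
    and "eventually (\<lambda>n::nat. L (exp (real n)) \<le> L (exp (real (Suc n)))) sequentially"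
  shows "eventually (\<lambda>n. 0 \<le> ln_increment L n) sequentially"
proof -
  obtain N where N: "\<And>n. n \<ge> N \<Longrightarrow> L (exp (real n)) \<le> L (exp (real (Suc n)))"
    using assms(2) unfolding eventually_sequentially by blast
  have "0 \<le> ln_increment L n" if "n \<ge> N + 1" for n
  proof -
    have "real (2 * n - 2) = 2 * real n - 2" and "2 * n - 2 \<ge> N"
      using that by (auto simp: of_nat_diff)
    then have "L (exp (2 * real n - 2)) \<le> L (exp (2 * real n - 1))"
      and "L (exp (2 * real n - 1)) \<le> L (exp (2 * real n))"
      using N[of "2 * n - 2"] N[of "2 * n - 1"] that by (auto simp: of_nat_diff)
    then show ?thesis
      unfolding ln_increment_def using pos by simp
  qed
  then show ?thesis
    unfolding eventually_sequentially by blast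
qed

lemma lowpt_Suc:
  assumes "\<beta> \<noteq> 0"
  shows "lowpt \<beta> L (Suc n) = lowpt \<beta> L n + 1 + ln_increment L n / (2 * \<beta>)"
  unfolding lowpt_def ln_increment_def using assms by (simp add: field_simps)

lemma filterlim_at_top_if_eventually_increment:
  fixes a :: "nat \<Rightarrow> real"
  assumes "eventually (\<lambda>n. a n + c \<le> a (Suc n)) sequentially" and "c > 0"
  shows "filterlim a at_top sequentially"
proof -
  obtain N where N: "\<And>n. n \<ge> N \<Longrightarrow> a n + c \<le> a (Suc n)"
    using assms(1) unfolding eventually_sequentially by blast
  have lower: "a N + (real n - real N) * c \<le> a n" if "N \<le> n" for n
    using that
  proof (induction n rule: dec_induct)
    case (step m)
    then show ?case using N[of m] by (simp add: algebra_simps)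
  qed simp
  have "filterlim (\<lambda>n::nat. a N + (real n - real N) * c) at_top sequentially"
    using \<open>c > 0\<close> by real_asymp
  then show ?thesis
    by (rule filterlim_at_top_mono) (use lower in \<open>auto simp: eventually_sequentially\<close>)
qed

text \<open>Uniqueness holds among all \<open>m\<close>, including those before \<open>a\<close> becomes monotone: for
  large \<open>y\<close> the finitely many early intervals all lie below \<open>y\<close>.\<close>

lemma eventually_unique_bracket:
  fixes a :: "nat \<Rightarrow> real"
  assumes "eventually (\<lambda>n. a n \<le> a (Suc n)) sequentially" and "filterlim a at_top sequentially"
  shows "eventually (\<lambda>y. \<exists>n\<ge>M. a n \<le> y \<and> y < a (Suc n) \<and>
           (\<forall>m. a m \<le> y \<and> y < a (Suc m) \<longrightarrow> m = n)) at_top"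
proof -
  obtain N where N: "\<And>n. n \<ge> N \<Longrightarrow> a n \<le> a (Suc n)"
    using assms(1) unfolding eventually_sequentially by blast
  have mono: "a i \<le> a j" if "N \<le> i" "i \<le> j" for i j
    using that(2)
  proof (induction j rule: dec_induct)
    case (step k)
    then show ?case using N[of k] that(1) by simp
  qed simp
  define K where "K = max M N"
  define Y where "Y = Max ((\<lambda>m. a (Suc m)) ` {..K})"
  have Y: "a (Suc m) \<le> Y" if "m \<le> K" for m
    unfolding Y_def using that by auto
  have "\<exists>n\<ge>M. a n \<le> y \<and> y < a (Suc n) \<and> (\<forall>m. a m \<le> y \<and> y < a (Suc m) \<longrightarrow> m = n)"
    if "Y \<le> y" for y
  proof -
    define P where "P = (\<lambda>n. Suc K \<le> n \<and> a n \<le> y)"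
    have "P (Suc K)"
      using Y[of K] that unfolding P_def by simp
    obtain B where B: "\<And>n. n \<ge> B \<Longrightarrow> y < a n"
      using assms(2) unfolding filterlim_at_top_dense eventually_sequentially by blast
    have bounded: "\<forall>n. P n \<longrightarrow> n \<le> B"
      using B unfolding P_def by (metis nat_le_linear not_le)
    then obtain n where "P n" and greatest: "\<And>m. P m \<Longrightarrow> m \<le> n"
      using Nat.ex_has_greatest_nat[of P "Suc K" B] \<open>P (Suc K)\<close> bounded by blast
    have "\<not> P (Suc n)"
      using greatest[of "Suc n"] Suc_n_not_le_n by blast
    then have n: "Suc K \<le> n" "a n \<le> y" "y < a (Suc n)"
      using \<open>P n\<close> unfolding P_def by auto
    have unique: "m = n" if m: "a m \<le> y" "y < a (Suc m)" for m
    proof -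
      have "\<not> m \<le> K"
        using Y[of m] m \<open>Y \<le> y\<close> by force
      then have "N \<le> m" and "N \<le> n"
        using n(1) unfolding K_def by auto
      show ?thesis
      proof (rule linorder_cases[of m n])
        assume "m < n"
        then show ?thesis
          using mono[of "Suc m" n] \<open>N \<le> m\<close> m n by simp
      next
        assume "n < m"
        then show ?thesis
          using mono[of "Suc n" m] \<open>N \<le> n\<close> m n by simp
      qed
    qed
    have "M \<le> n"
      using n(1) unfolding K_def by simp
    with n unique show ?thesis
      by blast
  qed
  then show ?thesis
    unfolding eventually_at_top_linorder by blast
qed

lemma eventually_idx_bracket:
  assumes "\<beta> > 0" and "\<forall>x>0. L x > 0"
    and "eventually (\<lambda>n::nat. L (exp (real n)) \<le> L (exp (real (Suc n)))) sequentially"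
  shows "eventually (\<lambda>y. M \<le> idx \<beta> L y \<and> lowpt \<beta> L (idx \<beta> L y) \<le> y) at_top"
proof -
  have step: "eventually (\<lambda>n. lowpt \<beta> L n + 1 \<le> lowpt \<beta> L (Suc n)) sequentially"
    using eventually_ln_increment_nonneg[OF assms(2,3)]
    by eventually_elim (use \<open>\<beta> > 0\<close> in \<open>simp add: lowpt_Suc\<close>)
  have "eventually (\<lambda>n. lowpt \<beta> L n \<le> lowpt \<beta> L (Suc n)) sequentially"
    using step by eventually_elim simp
  moreover have "filterlim (lowpt \<beta> L) at_top sequentially"
    using step by (rule filterlim_at_top_if_eventually_increment) simp
  ultimately have "eventually (\<lambda>y. \<exists>n\<ge>max 2 M. lowpt \<beta> L n \<le> y \<and> y < lowpt \<beta> L (Suc n) \<and>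
      (\<forall>m. lowpt \<beta> L m \<le> y \<and> y < lowpt \<beta> L (Suc m) \<longrightarrow> m = n)) at_top"
    by (rule eventually_unique_bracket)
  then show ?thesis
  proof eventually_elim
    case (elim y)
    then obtain n where n: "max 2 M \<le> n" "lowpt \<beta> L n \<le> y" "y < lowpt \<beta> L (Suc n)"
      and unique: "\<And>m. lowpt \<beta> L m \<le> y \<Longrightarrow> y < lowpt \<beta> L (Suc m) \<Longrightarrow> m = n"
      by blast
    have "idx \<beta> L y = n"
      unfolding idx_def
    proof (rule the_equality)
      show "2 \<le> n \<and> lowpt \<beta> L n \<le> y \<and> y < lowpt \<beta> L (n + 1)"
        using n by simp
    next
      fix m
      assume "2 \<le> m \<and> lowpt \<beta> L m \<le> y \<and> y < lowpt \<beta> L (m + 1)"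
      then show "m = n"
        using unique by simp
    qed
    then show ?case
      using n by simp
  qed
qed

lemma g1_tilde_minus_g1_bound:
  assumes "\<beta> > 0" and "idx \<beta> L y = n" and "lowpt \<beta> L n \<le> y" and "0 \<le> ln_increment L n"
  shows "\<bar>g1_tilde \<beta> L y - g1 \<beta> L y\<bar> \<le> ln_increment L n / (2 * \<beta>)"
proof -
  have "ln_increment L n / (2 * \<beta>)
      = ln (L (exp (2 * real n))) / (2 * \<beta>) - ln (L (exp (2 * real n - 2))) / (2 * \<beta>)"
    unfolding ln_increment_def by (simp add: diff_divide_distrib)
  moreover have "0 \<le> ln_increment L n / (2 * \<beta>)"
    using assms(1,4) by simp
  ultimately show ?thesis
    using assms(3) unfolding g1_tilde_def g1_def lowpt_def assms(2) Let_def by (auto; linarith)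
qed

theorem lemmaA1:
  fixes \<beta> :: real and L :: "real \<Rightarrow> real"
  assumes "\<beta> > 0"
    and "\<forall>x>0. L x > 0"
    and "slowly_varying L"
    and "eventually (\<lambda>n::nat. L (exp (real n)) \<le> L (exp (real (Suc n)))) sequentially"
  shows "((\<lambda>y. g1_tilde \<beta> L y - g1 \<beta> L y) \<longlongrightarrow> 0) at_top"
proof -
  obtain N where N: "\<And>n. n \<ge> N \<Longrightarrow> 0 \<le> ln_increment L n"
    using eventually_ln_increment_nonneg[OF assms(2,4)] unfolding eventually_sequentially by blast
  have idx: "eventually (\<lambda>y. M \<le> idx \<beta> L y \<and> lowpt \<beta> L (idx \<beta> L y) \<le> y) at_top" for M
    using eventually_idx_bracket[OF assms(1,2,4)] .
  have "filterlim (idx \<beta> L) sequentially at_top"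
    unfolding filterlim_at_top
  proof
    fix M
    show "eventually (\<lambda>y. M \<le> idx \<beta> L y) at_top"
      using idx[of M] by eventually_elim simp
  qed
  with ln_increment_tendsto_0[OF assms(3,2)]
  have "((\<lambda>y. ln_increment L (idx \<beta> L y)) \<longlongrightarrow> 0) at_top"
    by (rule filterlim_compose)
  moreover have "eventually (\<lambda>y. norm (g1_tilde \<beta> L y - g1 \<beta> L y)
      \<le> norm (ln_increment L (idx \<beta> L y)) * (1 / (2 * \<beta>))) at_top"
    using idx[of N] by eventually_elim (use g1_tilde_minus_g1_bound[OF assms(1)] N in force)
  ultimately show ?thesis
    by (rule tendsto_0_le)
qed

end
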